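(* Let $\mathcal{M}=(K,G,A,(\gamma')_{\gamma\in\Gamma},(\delta')_{\delta\in\Delta})$ be a model of $T$ and $\kappa>|\Gamma\Delta|$ an infinite cardinal. Let $K'$ be a real closed subfield of $K$ with $|K'|<\kappa$, $G'$ a pure subgroup of $G$ containing $\Gamma'$ with $G'\subseteq K'(i)$, and $A'$ a pure subgroup of $A$ containing $\Delta'$ with $A'\subseteq K'$, such that $K'(i)$ and $\mathbb{Q}(GA)$ are free over $\mathbb{Q}(G'A')$. Then $G\cap K'(i)=G'$ and $A\cap K'=A'$. Moreover, under these hypotheses, the following are equivalent: (a) for every $k\in(K')^{>0}$ there is $a\in A'$ with $a\le k<a\varepsilon'$; (b) $K'$ is closed under $\lambda$, i.e. $\lambda((K')^{>0})\subseteq K'$.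
   Context: $T$ is the theory of structures $(K,G,A,(\gamma')_{\gamma\in\Gamma},(\delta')_{\delta\in\Delta})$ (for a fixed finite rank $\Gamma\le\mathbb{S}^1$ and $\Delta=\varepsilon^{\mathbb{Z}}$, real $\varepsilon>1$) with $K$ real closed, $A\le K^{>0}$ having $\varepsilon'$ as least element $>1$, $G$ a dense subgroup of $\mathbb{S}^1(K)$, for all $k\in K^{>0}$ some $a\in A$ with $a\le k<a\varepsilon'$, $\gamma\mapsto\gamma'$ and $\delta\mapsto\delta'$ homomorphisms into $G$ and $A$, the orientation axioms, the Mann axioms (every nondegenerate solution in $GA\subseteq K(i)$ of $\sum a_ix_i=1$, $a_i\in\mathbb{Q}^\times$, is the image $(\gamma_1'\delta_1',\dots)$ of a nondegenerate solution in $\Gamma\Delta$), and torsion of $G$ equal to the image of torsion of $\Gamma$. $\Gamma'$, $\Delta'$ denote the images of $\Gamma,\Delta$. $K(i)$ is identified with $K^2$; $A$ is viewed inside $K(i)$. A subgroup $B$ of $A$ is pure if $B\cap A^{[m]}=B^{[m]}$ for all $m\ge1$. For subfields $k\subseteq E,F$ of a common field, $E$ and $F$ are free over $k$ if every subset of $E$ algebraically independent over $k$ is algebraically independent over $F$. $\lambda:K^{>0}\to A$ sends $k$ to the unique $a\in A$ with $a\le k<a\varepsilon'$. *)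

theory Defs
  imports Complex_Main "HOL-Computational_Algebra.Polynomial"
begin

section \<open>The field K(i), represented as pairs over an ordered field K\<close>

datatype 'a cx = Cx (cRe: 'a) (cIm: 'a)

instantiation cx :: (linordered_field) field
begin
definition "0 = Cx 0 0"
definition "1 = Cx 1 0"
definition "x + y = Cx (cRe x + cRe y) (cIm x + cIm y)"
definition "x - y = Cx (cRe x - cRe y) (cIm x - cIm y)"
definition "- x = Cx (- cRe x) (- cIm x)"
definition "x * y = Cx (cRe x * cRe y - cIm x * cIm y) (cRe x * cIm y + cIm x * cRe y)"
definition "inverse x = Cx (cRe x / (cRe x * cRe x + cIm x * cIm x))
                            (- cIm x / (cRe x * cRe x + cIm x * cIm x))"
definition "x div (y::'a cx) = x * inverse y"
instance
proof
  fix a b c :: "'a cx"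
  show "a * b * c = a * (b * c)"
    by (cases a; cases b; cases c) (simp add: times_cx_def algebra_simps)
  show "a * b = b * a"
    by (cases a; cases b) (simp add: times_cx_def algebra_simps)
  show "1 * a = a"
    by (cases a) (simp add: times_cx_def one_cx_def)
  show "(a + b) * c = a * c + b * c"
    by (cases a; cases b; cases c) (simp add: times_cx_def plus_cx_def algebra_simps)
  show "a + b + c = a + (b + c)"
    by (simp add: plus_cx_def algebra_simps)
  show "a + b = b + a"
    by (simp add: plus_cx_def algebra_simps)
  show "0 + a = a"
    by (cases a) (simp add: plus_cx_def zero_cx_def)
  show "- a + a = 0"
    by (simp add: plus_cx_def uminus_cx_def zero_cx_def)
  show "a - b = a + - b"
    by (simp add: plus_cx_def uminus_cx_def minus_cx_def)
  show "(0::'a cx) \<noteq> 1"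
    by (simp add: zero_cx_def one_cx_def)
  show "a div b = a * inverse b"
    by (simp add: divide_cx_def)
  show "inverse (0::'a cx) = 0"
    by (simp add: inverse_cx_def zero_cx_def)
  assume "a \<noteq> 0"
  then obtain x y where a: "a = Cx x y" and nz: "x * x + y * y \<noteq> 0"
    by (cases a) (auto simp: zero_cx_def sum_squares_eq_zero_iff)
  define s where "s = x * x + y * y"
  have s: "s \<noteq> 0" using nz by (simp add: s_def)
  have re: "x / s * x - (- y / s) * y = 1"
    using s by (simp add: s_def divide_simps)
  have im: "x / s * y + (- y / s) * x = 0"
    by (simp add: divide_simps algebra_simps)
  show "inverse a * a = 1"
    using re im by (simp add: a inverse_cx_def times_cx_def one_cx_def s_def[symmetric])
qed
end

lemma of_nat_cx: "(of_nat n :: 'a::linordered_field cx) = Cx (of_nat n) 0"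
  by (induction n) (simp_all add: zero_cx_def one_cx_def plus_cx_def)

instance cx :: (linordered_field) field_char_0
  by standard (auto simp: inj_on_def of_nat_cx)

definition of_k :: "'a::linordered_field \<Rightarrow> 'a cx" where
  "of_k a = Cx a 0"

definition circle :: "'a::linordered_field cx set" where
  "circle = {z. cRe z * cRe z + cIm z * cIm z = 1}"

definition adjoin_i :: "'a::linordered_field set \<Rightarrow> 'a cx set" where
  "adjoin_i F = {Cx a b | a b. a \<in> F \<and> b \<in> F}"

definition is_subfield :: "'a::field set \<Rightarrow> bool" where
  "is_subfield F \<longleftrightarrow> 0 \<in> F \<and> 1 \<in> F \<and> (\<forall>x\<in>F. \<forall>y\<in>F. x + y \<in> F \<and> x * y \<in> F)
     \<and> (\<forall>x\<in>F. - x \<in> F) \<and> (\<forall>x\<in>F. x \<noteq> 0 \<longrightarrow> inverse x \<in> F)"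

text \<open>The subfield generated by X (over the prime field Q, as char 0).\<close>
definition gen_subfield :: "'a::field set \<Rightarrow> 'a set" where
  "gen_subfield X = \<Inter> {F. is_subfield F \<and> X \<subseteq> F}"

definition real_closed_subfield :: "'a::linordered_field set \<Rightarrow> bool" where
  "real_closed_subfield F \<longleftrightarrow> is_subfield F
     \<and> (\<forall>x\<in>F. 0 < x \<longrightarrow> (\<exists>y\<in>F. y * y = x))
     \<and> (\<forall>p. (\<forall>i. coeff p i \<in> F) \<and> odd (degree p) \<longrightarrow> (\<exists>x\<in>F. poly p x = 0))"

text \<open>A polynomial in n variables is a finitely supported coefficient function on
  exponent vectors (lists of length n).\<close>
definition alg_indep_over :: "'a::field set \<Rightarrow> 'a set \<Rightarrow> bool" where
  "alg_indep_over F S \<longleftrightarrow>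
    (\<forall>(xs::'a list) (c::nat list \<Rightarrow> 'a).
       distinct xs \<and> set xs \<subseteq> S \<and> finite {e. c e \<noteq> 0}
       \<and> (\<forall>e. c e \<noteq> 0 \<longrightarrow> length e = length xs) \<and> (\<forall>e. c e \<in> F)
       \<and> (\<Sum>e\<in>{e. c e \<noteq> 0}. c e * (\<Prod>i<length xs. (xs ! i) ^ (e ! i))) = 0
       \<longrightarrow> (\<forall>e. c e = 0))"

definition free_over :: "'a::field set \<Rightarrow> 'a set \<Rightarrow> 'a set \<Rightarrow> bool" where
  "free_over k E F \<longleftrightarrow> (\<forall>S. S \<subseteq> E \<and> alg_indep_over k S \<longrightarrow> alg_indep_over F S)"

definition mult_subgroup :: "'a::field set \<Rightarrow> bool" where
  "mult_subgroup H \<longleftrightarrow> 1 \<in> H \<and> (\<forall>x\<in>H. x \<noteq> 0 \<and> inverse x \<in> H)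
     \<and> (\<forall>x\<in>H. \<forall>y\<in>H. x * y \<in> H)"

definition gen_subgroup :: "'a::field set \<Rightarrow> 'a set" where
  "gen_subgroup B = \<Inter> {H. mult_subgroup H \<and> B \<subseteq> H}"

definition pows :: "nat \<Rightarrow> 'a::field set \<Rightarrow> 'a set" where
  "pows m X = (\<lambda>x. x ^ m) ` X"

definition pure_subgroup :: "'a::field set \<Rightarrow> 'a set \<Rightarrow> bool" where
  "pure_subgroup H G \<longleftrightarrow> mult_subgroup H \<and> H \<subseteq> G
     \<and> (\<forall>m\<ge>1. H \<inter> pows m G = pows m H)"

definition torsion :: "'a::field set \<Rightarrow> 'a set" where
  "torsion X = {x \<in> X. \<exists>n\<ge>1. x ^ n = 1}"

definition finite_rank :: "'a::field set \<Rightarrow> bool" where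
  "finite_rank \<Gamma> \<longleftrightarrow> (\<exists>B. finite B \<and> B \<subseteq> \<Gamma> \<and> (\<forall>g\<in>\<Gamma>. \<exists>n\<ge>1. g ^ n \<in> gen_subgroup B))"

definition nondeg_solution :: "nat \<Rightarrow> (nat \<Rightarrow> rat) \<Rightarrow> (nat \<Rightarrow> 'a::field_char_0) \<Rightarrow> bool" where
  "nondeg_solution n a x \<longleftrightarrow> (\<Sum>i<n. of_rat (a i) * x i) = 1
     \<and> (\<forall>I. I \<subseteq> {..<n} \<and> I \<noteq> {} \<longrightarrow> (\<Sum>i\<in>I. of_rat (a i) * x i) \<noteq> 0)"

definition orient_C :: "complex \<Rightarrow> complex \<Rightarrow> complex \<Rightarrow> bool" where
  "orient_C z1 z2 z3 \<longleftrightarrow>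
     0 < (Re z2 - Re z1) * (Im z3 - Im z1) - (Im z2 - Im z1) * (Re z3 - Re z1)"

definition orient_K :: "'a::linordered_field cx \<Rightarrow> 'a cx \<Rightarrow> 'a cx \<Rightarrow> bool" where
  "orient_K z1 z2 z3 \<longleftrightarrow>
     0 < (cRe z2 - cRe z1) * (cIm z3 - cIm z1) - (cIm z2 - cIm z1) * (cRe z3 - cRe z1)"

definition Delta :: "real \<Rightarrow> real set" where
  "Delta \<epsilon> = range (\<lambda>z::int. \<epsilon> powi z)"

definition model_T ::
  "complex set \<Rightarrow> real \<Rightarrow> 'a::linordered_field cx set \<Rightarrow> 'a set
     \<Rightarrow> (complex \<Rightarrow> 'a cx) \<Rightarrow> (real \<Rightarrow> 'a) \<Rightarrow> bool" where
  "model_T \<Gamma> \<epsilon> G A gp dp \<longleftrightarrow>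
     \<comment> \<open>parameters: Gamma a finite rank subgroup of S^1, epsilon > 1\<close>
     mult_subgroup \<Gamma> \<and> \<Gamma> \<subseteq> {z. cmod z = 1} \<and> finite_rank \<Gamma> \<and> 1 < \<epsilon>
     \<comment> \<open>K real closed\<close>
     \<and> real_closed_subfield (UNIV :: 'a set)
     \<comment> \<open>A subgroup of K^{>0} with least element > 1 equal to epsilon'\<close>
     \<and> mult_subgroup A \<and> A \<subseteq> {x. 0 < x}
     \<and> dp \<epsilon> \<in> A \<and> 1 < dp \<epsilon> \<and> (\<forall>a\<in>A. 1 < a \<longrightarrow> dp \<epsilon> \<le> a)
     \<comment> \<open>G a dense subgroup of S^1(K)\<close>
     \<and> mult_subgroup G \<and> G \<subseteq> circle
     \<and> (\<forall>z\<in>circle. \<forall>e>0. \<exists>g\<in>G. \<bar>cRe g - cRe z\<bar> < e \<and> \<bar>cIm g - cIm z\<bar> < e)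
     \<comment> \<open>A is discrete with steps epsilon'\<close>
     \<and> (\<forall>k>0. \<exists>a\<in>A. a \<le> k \<and> k < a * dp \<epsilon>)
     \<comment> \<open>homomorphisms\<close>
     \<and> (\<forall>g\<in>\<Gamma>. gp g \<in> G) \<and> (\<forall>g\<in>\<Gamma>. \<forall>h\<in>\<Gamma>. gp (g * h) = gp g * gp h)
     \<and> (\<forall>d\<in>Delta \<epsilon>. dp d \<in> A) \<and> (\<forall>d\<in>Delta \<epsilon>. \<forall>d'\<in>Delta \<epsilon>. dp (d * d') = dp d * dp d')
     \<comment> \<open>orientation axioms\<close>
     \<and> (\<forall>g1\<in>\<Gamma>. \<forall>g2\<in>\<Gamma>. \<forall>g3\<in>\<Gamma>. orient_C g1 g2 g3 \<longleftrightarrow> orient_K (gp g1) (gp g2) (gp g3))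
     \<comment> \<open>Mann axioms\<close>
     \<and> (\<forall>n a x. (\<forall>i<n. a i \<noteq> 0 \<and> x i \<in> {g * of_k b | g b. g \<in> G \<and> b \<in> A})
            \<and> nondeg_solution n a x \<longrightarrow>
          (\<exists>g d. (\<forall>i<n. g i \<in> \<Gamma> \<and> d i \<in> Delta \<epsilon>)
             \<and> nondeg_solution n a (\<lambda>i. g i * complex_of_real (d i))
             \<and> (\<forall>i<n. x i = gp (g i) * of_k (dp (d i)))))
     \<comment> \<open>torsion\<close>
     \<and> torsion G = gp ` torsion \<Gamma>"

definition lam :: "'a::linordered_field set \<Rightarrow> 'a \<Rightarrow> 'a \<Rightarrow> 'a" where
  "lam A e k = (THE a. a \<in> A \<and> a \<le> k \<and> k < a * e)"

end

theory Submission
  imports Defs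
begin

text \<open>
  If y \<in> GA lies in K'(i), freeness makes y algebraic over \<rat>(G'A'), and after clearing
  denominators this is a vanishing sum of terms q h y^n with q rational and h \<in> G'A'.
  Since the coefficient of some power of y is nonzero, some minimal vanishing subsum
  involves two different exponents; normalising it to a sum equal to 1, the Mann axiom puts
  the quotient of two of its terms into \<Gamma>'\<Delta>' \<subseteq> G'A', whence y^m \<in> G'A' for some m \<ge> 1.
  For y = g \<in> G the A'-part of g^m must be 1 because G and G' lie on the unit circle, so
  g^m \<in> G'; purity of G' and the torsion axiom then give g \<in> G'. The argument for A is the
  same, with positivity in place of the circle. Finally \<lambda>(k) is the unique a \<in> A with
  a \<le> k < a\<epsilon>', so the equivalence follows from A \<inter> K' = A'.
\<close>

section \<open>Subgroups of the multiplicative group\<close>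

lemma mult_subgroup_one: "mult_subgroup H \<Longrightarrow> 1 \<in> H"
  by (simp add: mult_subgroup_def)

lemma mult_subgroup_nonzero: "mult_subgroup H \<Longrightarrow> x \<in> H \<Longrightarrow> x \<noteq> 0"
  by (simp add: mult_subgroup_def)

lemma mult_subgroup_inverse: "mult_subgroup H \<Longrightarrow> x \<in> H \<Longrightarrow> inverse x \<in> H"
  by (simp add: mult_subgroup_def)

lemma mult_subgroup_mult: "mult_subgroup H \<Longrightarrow> x \<in> H \<Longrightarrow> y \<in> H \<Longrightarrow> x * y \<in> H"
  by (simp add: mult_subgroup_def)

lemma mult_subgroup_divide: "mult_subgroup H \<Longrightarrow> x \<in> H \<Longrightarrow> y \<in> H \<Longrightarrow> x / y \<in> H"
  by (simp add: divide_inverse mult_subgroup_mult mult_subgroup_inverse)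

lemma mult_subgroup_power: "mult_subgroup H \<Longrightarrow> x \<in> H \<Longrightarrow> x ^ n \<in> H"
  by (induction n) (simp_all add: mult_subgroup_one mult_subgroup_mult)

lemma torsion_subset_one:
  fixes A :: "'a::linordered_field set"
  assumes "A \<subseteq> {x. 0 < x}"
  shows "torsion A \<subseteq> {1}"
proof
  fix a assume "a \<in> torsion A"
  then obtain n where "a \<in> A" "n \<ge> 1" "a ^ n = 1" by (auto simp: torsion_def)
  moreover have "0 < a" using assms \<open>a \<in> A\<close> by blast
  ultimately show "a \<in> {1}" using power_eq_iff_eq_base[of n a 1] by simp
qed

lemma pure_subgroup_root_mem:
  assumes "pure_subgroup H G" "torsion G \<subseteq> H" "mult_subgroup G"
    and "x \<in> G" "m \<ge> 1" "x ^ m \<in> H"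
  shows "x \<in> H"
proof -
  have "x ^ m \<in> pows m H"
    using assms(1,4,5,6) unfolding pure_subgroup_def pows_def by blast
  then obtain y where y: "y \<in> H" "x ^ m = y ^ m" by (auto simp: pows_def)
  have yG: "y \<in> G" and y0: "y \<noteq> 0"
    using assms(1) y(1) mult_subgroup_nonzero by (auto simp: pure_subgroup_def)
  have "(x / y) ^ m = 1" using y(2) y0 by (simp add: power_divide)
  then have "x / y \<in> H"
    using assms(2-5) yG mult_subgroup_divide unfolding torsion_def by blast
  then have "x / y * y \<in> H"
    using assms(1) y(1) mult_subgroup_mult unfolding pure_subgroup_def by blast
  then show ?thesis using y0 by simp
qed

lemma power_mem_of_quotient:
  fixes x :: "'a::field"
  assumes H: "mult_subgroup H" and "x \<noteq> 0" "a \<noteq> b" "x ^ a / x ^ b \<in> H"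
  shows "\<exists>m\<ge>1. x ^ m \<in> H"
proof (cases "b < a")
  case True
  then have "x ^ (a - b) = x ^ a / x ^ b" using \<open>x \<noteq> 0\<close> by (simp add: power_diff)
  then show ?thesis using True assms(4) by (intro exI[of _ "a - b"]) simp
next
  case False
  then have "x ^ (b - a) = inverse (x ^ a / x ^ b)"
    using \<open>x \<noteq> 0\<close> \<open>a \<noteq> b\<close> by (simp add: power_diff)
  then show ?thesis
    using False \<open>a \<noteq> b\<close> mult_subgroup_inverse[OF H assms(4)] by (intro exI[of _ "b - a"]) simp
qed

section \<open>Rational spans and the generated subfield\<close>

lemma is_subfield_gen_subfield: "is_subfield (gen_subfield X)"
  unfolding gen_subfield_def is_subfield_def by blast

lemma gen_subfield_subset: "X \<subseteq> gen_subfield X"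
  unfolding gen_subfield_def by blast

lemma gen_subfield_least: "is_subfield F \<Longrightarrow> X \<subseteq> F \<Longrightarrow> gen_subfield X \<subseteq> F"
  unfolding gen_subfield_def by blast

inductive_set rat_span :: "'a::field_char_0 set \<Rightarrow> 'a set" for H where
  zero: "0 \<in> rat_span H"
| add_scaled: "h \<in> H \<Longrightarrow> s \<in> rat_span H \<Longrightarrow> of_rat q * h + s \<in> rat_span H"

lemma rat_span_base: "h \<in> H \<Longrightarrow> h \<in> rat_span H"
  using rat_span.add_scaled[of h H 0 1] by (simp add: rat_span.zero)

lemma rat_span_add: "s \<in> rat_span H \<Longrightarrow> s' \<in> rat_span H \<Longrightarrow> s + s' \<in> rat_span H"
  by (induction s rule: rat_span.induct) (auto simp: add.assoc intro: rat_span.intros)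

lemma rat_span_scale: "s \<in> rat_span H \<Longrightarrow> of_rat c * s \<in> rat_span H"
proof (induction s rule: rat_span.induct)
  case (add_scaled h s q)
  have "of_rat c * (of_rat q * h + s) = of_rat (c * q) * h + of_rat c * s"
    by (simp add: algebra_simps of_rat_mult)
  then show ?case using add_scaled by (simp add: rat_span.intros)
qed (simp add: rat_span.zero)

lemma rat_span_uminus: "s \<in> rat_span H \<Longrightarrow> - s \<in> rat_span H"
  using rat_span_scale[of s H "-1"] by simp

lemma rat_span_mult_base:
  assumes "mult_subgroup H" "g \<in> H"
  shows "s \<in> rat_span H \<Longrightarrow> g * s \<in> rat_span H"
proof (induction s rule: rat_span.induct)
  case (add_scaled h s q)
  have "g * (of_rat q * h + s) = of_rat q * (g * h) + g * s"
    by (simp add: algebra_simps)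
  moreover have "g * h \<in> H" using assms add_scaled(1) by (rule mult_subgroup_mult)
  ultimately show ?case using add_scaled by (simp add: rat_span.intros)
qed (simp add: rat_span.zero)

lemma rat_span_mult:
  assumes "mult_subgroup H" "s' \<in> rat_span H"
  shows "s \<in> rat_span H \<Longrightarrow> s * s' \<in> rat_span H"
proof (induction s rule: rat_span.induct)
  case (add_scaled h s q)
  have "(of_rat q * h + s) * s' = of_rat q * (h * s') + s * s'"
    by (simp add: algebra_simps)
  then show ?case
    using add_scaled assms rat_span_mult_base rat_span_scale rat_span_add by metis
qed (simp add: rat_span.zero)

lemma rat_span_sum_repr:
  "s \<in> rat_span H \<Longrightarrow> \<exists>S f. finite S \<and> S \<subseteq> H \<and> s = (\<Sum>h\<in>S. of_rat (f h) * h)"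
proof (induction s rule: rat_span.induct)
  case zero
  show ?case by (intro exI[of _ "{}"]) simp
next
  case (add_scaled h s q)
  then obtain S f where S: "finite S" "S \<subseteq> H" "s = (\<Sum>h\<in>S. of_rat (f h) * h)"
    by blast
  define f' where "f' = f(h := f h + (if h \<in> S then q else q - f h))"
  have "of_rat q * h + s = (\<Sum>h'\<in>insert h S. of_rat (f' h') * h')"
  proof (cases "h \<in> S")
    case True
    have "(\<Sum>h'\<in>S - {h}. of_rat (f' h') * h') = (\<Sum>h'\<in>S - {h}. of_rat (f h') * h')"
      by (rule sum.cong) (auto simp: f'_def)
    then show ?thesis
      using S True by (simp add: f'_def sum.remove[of S h] insert_absorb of_rat_add algebra_simps)
  next
    case False
    then show ?thesis
      using S by (auto simp: f'_def intro!: sum.cong)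
  qed
  then show ?case using S add_scaled(1) by (intro exI[of _ "insert h S"] exI[of _ f']) auto
qed

definition rat_frac :: "'a::field_char_0 set \<Rightarrow> 'a set" where
  "rat_frac H = {p / q | p q. p \<in> rat_span H \<and> q \<in> rat_span H \<and> q \<noteq> 0}"

lemma rat_fracI: "p \<in> rat_span H \<Longrightarrow> q \<in> rat_span H \<Longrightarrow> q \<noteq> 0 \<Longrightarrow> p / q \<in> rat_frac H"
  unfolding rat_frac_def by blast

lemma rat_frac_is_subfield:
  assumes H: "mult_subgroup H"
  shows "is_subfield (rat_frac H)"
proof -
  have one: "1 \<in> rat_span H" using H by (simp add: mult_subgroup_one rat_span_base)
  have "0 \<in> rat_frac H" "1 \<in> rat_frac H"
    using rat_fracI[OF rat_span.zero one] rat_fracI[OF one one] by simp_all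
  moreover have "x + y \<in> rat_frac H \<and> x * y \<in> rat_frac H"
    if xy: "x \<in> rat_frac H" "y \<in> rat_frac H" for x y
  proof -
    obtain p q p' q' where pq: "p \<in> rat_span H" "q \<in> rat_span H" "q \<noteq> 0" "x = p / q"
      and pq': "p' \<in> rat_span H" "q' \<in> rat_span H" "q' \<noteq> 0" "y = p' / q'"
      using xy unfolding rat_frac_def by blast
    have "x + y = (p * q' + p' * q) / (q * q')" "x * y = (p * p') / (q * q')"
      using pq(3,4) pq'(3,4) by (simp_all add: add_frac_eq)
    moreover have "p * q' + p' * q \<in> rat_span H"
      using rat_span_add[OF rat_span_mult[OF H pq'(2) pq(1)] rat_span_mult[OF H pq(2) pq'(1)]] .
    moreover have "p * p' \<in> rat_span H" "q * q' \<in> rat_span H"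
      using rat_span_mult[OF H pq'(1) pq(1)] rat_span_mult[OF H pq'(2) pq(2)] .
    ultimately show ?thesis
      using pq(3) pq'(3) rat_fracI[of _ H "q * q'"] by simp
  qed
  moreover have "- x \<in> rat_frac H \<and> (x \<noteq> 0 \<longrightarrow> inverse x \<in> rat_frac H)"
    if x: "x \<in> rat_frac H" for x
  proof -
    obtain p q where pq: "p \<in> rat_span H" "q \<in> rat_span H" "q \<noteq> 0" "x = p / q"
      using x unfolding rat_frac_def by blast
    have "- x = (- p) / q" "inverse x = q / p" using pq(4) by simp_all
    then show ?thesis
      using pq rat_fracI[OF rat_span_uminus[OF pq(1)] pq(2,3)] rat_fracI[OF pq(2) pq(1)] by auto
  qed
  ultimately show ?thesis unfolding is_subfield_def by blast
qed

lemma gen_subfield_subset_rat_frac: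
  assumes "mult_subgroup H"
  shows "gen_subfield H \<subseteq> rat_frac H"
proof (rule gen_subfield_least[OF rat_frac_is_subfield[OF assms]])
  show "H \<subseteq> rat_frac H"
  proof
    fix h assume "h \<in> H"
    then have "h = h / 1" "h \<in> rat_span H" "1 \<in> rat_span H"
      using assms by (simp_all add: rat_span_base mult_subgroup_one)
    then show "h \<in> rat_frac H" unfolding rat_frac_def by fastforce
  qed
qed

lemma rat_frac_common_denominator:
  assumes H: "mult_subgroup H"
  shows "finite N \<Longrightarrow> \<forall>n\<in>N. r n \<in> rat_frac H \<Longrightarrow>
    \<exists>D. D \<noteq> 0 \<and> D \<in> rat_span H \<and> (\<forall>n\<in>N. D * r n \<in> rat_span H)"
proof (induction N rule: finite_induct)
  case empty
  show ?case using H by (intro exI[of _ 1]) (simp add: rat_span_base mult_subgroup_one)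
next
  case (insert n N)
  then obtain D where D: "D \<noteq> 0" "D \<in> rat_span H" "\<forall>m\<in>N. D * r m \<in> rat_span H"
    by blast
  obtain p q where pq: "p \<in> rat_span H" "q \<in> rat_span H" "q \<noteq> 0" "r n = p / q"
    using insert.prems unfolding rat_frac_def by blast
  have "q * D * r n = D * p" using pq(3,4) by simp
  then have "q * D * r n \<in> rat_span H" using rat_span_mult[OF H pq(1) D(2)] by (simp only:)
  moreover have "q * D * r m \<in> rat_span H" if "m \<in> N" for m
    using rat_span_mult[OF H pq(2) D(3)[rule_format, OF that]] by (simp only: ac_simps)
  moreover have "q * D \<in> rat_span H" using rat_span_mult[OF H D(2) pq(2)] .
  ultimately show ?case
    using D(1) pq(3) by (intro exI[of _ "q * D"]) auto
qed

section \<open>Algebraic relations from freeness\<close>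

lemma not_alg_indep_over_singleton:
  assumes F: "is_subfield F" "x \<in> F"
  shows "\<not> alg_indep_over F {x}"
proof
  assume ind: "alg_indep_over F {x}"
  define c where "c e = (if e = [1] then 1 else if e = [0] then - x else 0)" for e :: "nat list"
  let ?mon = "\<lambda>e. \<Prod>i<length [x]. ([x] ! i) ^ (e ! i)"
  have supp: "{e. c e \<noteq> 0} \<subseteq> {[0], [1]}" by (auto simp: c_def split: if_splits)
  then have fin: "finite {e. c e \<noteq> 0}" by (rule finite_subset) simp
  have "(\<Sum>e\<in>{e. c e \<noteq> 0}. c e * ?mon e) = (\<Sum>e\<in>{[0], [1]}. c e * ?mon e)"
    by (rule sum.mono_neutral_left) (use supp in auto)
  also have "\<dots> = 0" by (simp add: c_def)
  finally have rel: "(\<Sum>e\<in>{e. c e \<noteq> 0}. c e * ?mon e) = 0" .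
  have "0 \<in> F" "1 \<in> F" "- x \<in> F" using F by (simp_all add: is_subfield_def)
  then have cF: "\<forall>e. c e \<in> F" by (simp add: c_def)
  have len: "\<forall>e. c e \<noteq> 0 \<longrightarrow> length e = length [x]" using supp by auto
  have "c [1] = 0"
    by (rule ind[unfolded alg_indep_over_def, rule_format, of "[x]" c "[1]"])
      (use fin rel cF len in simp)
  then show False by (simp add: c_def)
qed

lemma alg_dependent_singleton_relation:
  assumes "\<not> alg_indep_over k {x}"
  shows "\<exists>N r n0. finite N \<and> (\<forall>n\<in>N. r n \<in> k) \<and> n0 \<in> N \<and> r n0 \<noteq> 0
    \<and> (\<Sum>n\<in>N. r n * x ^ n) = 0"
proof -
  obtain xs c e0 where xs: "distinct xs" "set xs \<subseteq> {x}" and fin: "finite {e. c e \<noteq> 0}"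
    and len: "\<forall>e. c e \<noteq> 0 \<longrightarrow> length e = length xs" and ck: "\<forall>e. c e \<in> k"
    and rel: "(\<Sum>e\<in>{e. c e \<noteq> 0}. c e * (\<Prod>i<length xs. (xs ! i) ^ (e ! i))) = 0"
    and e0: "c e0 \<noteq> 0"
    using assms unfolding alg_indep_over_def by blast
  have "xs = [x]"
  proof (rule ccontr)
    assume "xs \<noteq> [x]"
    with xs have "xs = []" by (cases xs) (auto simp: subset_singleton_iff)
    then have "e0 = []" "{e. c e \<noteq> 0} = {[]}" using len e0 by auto
    then show False using rel e0 \<open>xs = []\<close> by simp
  qed
  define N where "N = {n. c [n] \<noteq> 0}"
  have supp: "{e. c e \<noteq> 0} = (\<lambda>n. [n]) ` N"
    using len \<open>xs = [x]\<close> by (auto simp: N_def length_Suc_conv)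
  have inj: "inj_on (\<lambda>n. [n]) N" by (simp add: inj_on_def)
  have "finite N" using fin finite_imageD[OF _ inj] by (simp add: supp)
  moreover have "(\<Sum>n\<in>N. c [n] * x ^ n) = 0"
    using rel by (simp add: supp sum.reindex[OF inj] \<open>xs = [x]\<close>)
  moreover obtain n0 where "e0 = [n0]" "n0 \<in> N"
    using e0 supp by blast
  ultimately show ?thesis using ck e0 by (intro exI[of _ N] exI[of _ "\<lambda>n. c [n]"] exI[of _ n0]) simp
qed

lemma free_over_algebraic_relation:
  assumes "free_over k E F" "x \<in> E" "is_subfield F" "x \<in> F"
  shows "\<exists>N r n0. finite N \<and> (\<forall>n\<in>N. r n \<in> k) \<and> n0 \<in> N \<and> r n0 \<noteq> 0
    \<and> (\<Sum>n\<in>N. r n * x ^ n) = 0"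
proof -
  have "\<not> alg_indep_over F {x}" using assms(3,4) by (rule not_alg_indep_over_singleton)
  then have "\<not> alg_indep_over k {x}" using assms(1,2) unfolding free_over_def by blast
  then show ?thesis by (rule alg_dependent_singleton_relation)
qed

section \<open>Minimal vanishing subsums\<close>

definition minimal_zero_subsum :: "('i \<Rightarrow> 'a::comm_monoid_add) \<Rightarrow> 'i set \<Rightarrow> bool" where
  "minimal_zero_subsum t J \<longleftrightarrow> finite J \<and> J \<noteq> {} \<and> sum t J = 0
     \<and> (\<forall>J'. J' \<subset> J \<and> J' \<noteq> {} \<longrightarrow> sum t J' \<noteq> 0)"

lemma exists_minimal_zero_subsum:
  assumes "finite I" "I \<noteq> {}" "sum t I = 0"
  shows "\<exists>J\<subseteq>I. minimal_zero_subsum t J"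
proof -
  obtain J where J: "J \<subseteq> I" "J \<noteq> {}" "sum t J = 0"
    and least: "\<And>J'. J' \<subseteq> I \<and> J' \<noteq> {} \<and> sum t J' = 0 \<Longrightarrow> card J \<le> card J'"
    using ex_has_least_nat[of "\<lambda>J. J \<subseteq> I \<and> J \<noteq> {} \<and> sum t J = 0" I card] assms by blast
  have fin: "finite J" using J(1) assms(1) finite_subset by blast
  moreover have "sum t J' \<noteq> 0" if "J' \<subset> J" "J' \<noteq> {}" for J'
    using least[of J'] psubset_card_mono[OF fin that(1)] that J(1) by auto
  ultimately show ?thesis using J unfolding minimal_zero_subsum_def by blast
qed

lemma exists_minimal_zero_subsum_nonconstant:
  fixes t :: "'i \<Rightarrow> 'a::ab_group_add"
  assumes "finite I" "sum t I = 0" "sum t {i\<in>I. k i = n} \<noteq> 0"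
  shows "\<exists>J\<subseteq>I. minimal_zero_subsum t J \<and> (\<exists>i\<in>J. \<exists>j\<in>J. k i \<noteq> k j)"
  using assms
proof (induction "card I" arbitrary: I rule: less_induct)
  case less
  have "I \<noteq> {}" using less.prems(3) by auto
  then obtain J where J: "J \<subseteq> I" "minimal_zero_subsum t J"
    using exists_minimal_zero_subsum less.prems(1,2) by blast
  show ?case
  proof (cases "\<exists>i\<in>J. \<exists>j\<in>J. k i \<noteq> k j")
    case True
    then show ?thesis using J by blast
  next
    case False
    have J0: "finite J" "J \<noteq> {}" "sum t J = 0"
      using J(2) by (auto simp: minimal_zero_subsum_def)
    have "{i\<in>J. k i = n} = {} \<or> {i\<in>J. k i = n} = J" using False by blast
    then have fibre_J: "sum t {i\<in>J. k i = n} = 0" using J0(3) by (metis sum.empty)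
    have split: "{i\<in>I. k i = n} = {i\<in>I - J. k i = n} \<union> {i\<in>J. k i = n}"
      using J(1) by auto
    have "sum t {i\<in>I. k i = n} = sum t {i\<in>I - J. k i = n} + sum t {i\<in>J. k i = n}"
      unfolding split by (rule sum.union_disjoint) (use less.prems(1) J0(1) in auto)
    then have fibre: "sum t {i\<in>I - J. k i = n} \<noteq> 0"
      using less.prems(3) fibre_J by simp
    have rest: "sum t (I - J) = 0" using J(1) J0(3) less.prems(1,2) by (simp add: sum_diff)
    have smaller: "card (I - J) < card I"
      using J(1) J0(2) less.prems(1) by (intro psubset_card_mono) auto
    have "\<exists>J'\<subseteq>I - J. minimal_zero_subsum t J' \<and> (\<exists>i\<in>J'. \<exists>j\<in>J'. k i \<noteq> k j)"
      by (rule less.hyps[OF smaller _ rest fibre]) (use less.prems(1) in simp)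
    then show ?thesis by blast
  qed
qed

lemma rat_span_relation_minimal_zero_subsum:
  fixes x :: "'a::field_char_0"
  assumes "finite N" "\<forall>n\<in>N. s n \<in> rat_span H" "n0 \<in> N" "s n0 \<noteq> 0" "x \<noteq> 0"
    and rel: "(\<Sum>n\<in>N. s n * x ^ n) = 0"
  shows "\<exists>J c. J \<subseteq> N \<times> H \<and> minimal_zero_subsum (\<lambda>l. of_rat (c l) * (snd l * x ^ fst l)) J
    \<and> (\<exists>i\<in>J. \<exists>j\<in>J. fst i \<noteq> fst j)"
proof -
  have "\<forall>n\<in>N. \<exists>S f. finite S \<and> S \<subseteq> H \<and> s n = (\<Sum>h\<in>S. of_rat (f h) * h)"
    using assms(2) by (intro ballI rat_span_sum_repr) simp
  then obtain S f where Sf: "\<And>n. n \<in> N \<Longrightarrow>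
      finite (S n) \<and> S n \<subseteq> H \<and> s n = (\<Sum>h\<in>S n. of_rat (f n h) * h)"
    by metis
  define t where "t = (\<lambda>l. of_rat (f (fst l) (snd l)) * (snd l * x ^ fst l))"
  have fibre: "(\<Sum>h\<in>S n. t (n, h)) = s n * x ^ n" if "n \<in> N" for n
    using Sf[OF that] by (simp add: t_def sum_distrib_right mult.assoc)
  have fin: "finite (Sigma N S)" using assms(1) Sf by auto
  have "sum t (Sigma N S) = (\<Sum>n\<in>N. \<Sum>h\<in>S n. t (n, h))"
    using assms(1) Sf by (subst sum.Sigma) auto
  also have "\<dots> = 0" using fibre rel by simp
  finally have total: "sum t (Sigma N S) = 0" .
  have "{l\<in>Sigma N S. fst l = n0} = Pair n0 ` S n0" using assms(3) by auto
  then have "sum t {l\<in>Sigma N S. fst l = n0} = s n0 * x ^ n0"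
    using fibre[OF assms(3)] by (simp add: sum.reindex inj_on_def)
  then have "sum t {l\<in>Sigma N S. fst l = n0} \<noteq> 0" using assms(4,5) by simp
  then have "\<exists>J\<subseteq>Sigma N S. minimal_zero_subsum t J \<and> (\<exists>i\<in>J. \<exists>j\<in>J. fst i \<noteq> fst j)"
    by (rule exists_minimal_zero_subsum_nonconstant[OF fin total])
  then obtain J where J: "J \<subseteq> Sigma N S" "minimal_zero_subsum t J"
    "\<exists>i\<in>J. \<exists>j\<in>J. fst i \<noteq> fst j"
    by blast
  moreover have "Sigma N S \<subseteq> N \<times> H" using Sf by auto
  ultimately show ?thesis
    unfolding t_def by (intro exI[of _ J] exI[of _ "\<lambda>l. f (fst l) (snd l)"]) blast
qed

section \<open>The group GA and the Mann axiom\<close>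

lemma of_k_mult: "of_k (a * b) = of_k a * of_k (b::'k::linordered_field)"
  by (simp add: of_k_def times_cx_def)

lemma of_k_one: "of_k (1::'k::linordered_field) = 1"
  by (simp add: of_k_def one_cx_def)

lemma of_k_inverse: "of_k (inverse a) = inverse (of_k (a::'k::linordered_field))"
  by (cases "a = 0") (simp_all add: of_k_def inverse_cx_def field_simps)

lemma of_k_eq_0_iff: "of_k (a::'k::linordered_field) = 0 \<longleftrightarrow> a = 0"
  by (simp add: of_k_def zero_cx_def)

lemma of_k_power: "of_k (a ^ n) = of_k (a::'k::linordered_field) ^ n"
  by (induction n) (simp_all add: of_k_one of_k_mult)

definition ga_group :: "'k::linordered_field cx set \<Rightarrow> 'k set \<Rightarrow> 'k cx set" where
  "ga_group G A = {g * of_k a | g a. g \<in> G \<and> a \<in> A}"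

lemma ga_group_mono: "G' \<subseteq> G \<Longrightarrow> A' \<subseteq> A \<Longrightarrow> ga_group G' A' \<subseteq> ga_group G A"
  unfolding ga_group_def by blast

lemma mem_ga_group_left: "mult_subgroup A \<Longrightarrow> g \<in> G \<Longrightarrow> g \<in> ga_group G A"
  unfolding ga_group_def using mult_subgroup_one of_k_one by force

lemma mem_ga_group_right: "mult_subgroup G \<Longrightarrow> a \<in> A \<Longrightarrow> of_k a \<in> ga_group G A"
  unfolding ga_group_def using mult_subgroup_one by force

lemma ga_group_mult_subgroup:
  assumes G: "mult_subgroup G" and A: "mult_subgroup A"
  shows "mult_subgroup (ga_group G A)"
  unfolding mult_subgroup_def
proof (intro conjI ballI)
  show "1 \<in> ga_group G A" using G A mult_subgroup_one mem_ga_group_left by blast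
next
  fix x y assume "x \<in> ga_group G A" "y \<in> ga_group G A"
  then obtain g a g' a' where x: "x = g * of_k a" "g \<in> G" "a \<in> A"
    and y: "y = g' * of_k a'" "g' \<in> G" "a' \<in> A"
    unfolding ga_group_def by blast
  have "x * y = (g * g') * of_k (a * a')" using x y by (simp add: of_k_mult ac_simps)
  moreover have "g * g' \<in> G" "a * a' \<in> A" using G A x y mult_subgroup_mult by blast+
  ultimately show "x * y \<in> ga_group G A" unfolding ga_group_def by blast
next
  fix x assume "x \<in> ga_group G A"
  then obtain g a where x: "x = g * of_k a" "g \<in> G" "a \<in> A"
    unfolding ga_group_def by blast
  have "g \<noteq> 0" "a \<noteq> 0" using x G A mult_subgroup_nonzero by blast+
  then show "x \<noteq> 0" using x(1) by (simp add: of_k_eq_0_iff)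
  have "inverse x = inverse g * of_k (inverse a)" using x(1) by (simp add: of_k_inverse)
  moreover have "inverse g \<in> G" "inverse a \<in> A" using G A x mult_subgroup_inverse by blast+
  ultimately show "inverse x \<in> ga_group G A" unfolding ga_group_def by blast
qed

lemma model_T_mult_subgroups:
  assumes "model_T \<Gamma> \<epsilon> G A gp dp"
  shows "mult_subgroup G" "mult_subgroup A"
  using assms unfolding model_T_def by simp_all

lemma mann_axiom_finite_set:
  assumes model: "model_T \<Gamma> \<epsilon> G A gp dp"
    and "finite J" "\<forall>j\<in>J. a j \<noteq> 0" "\<forall>j\<in>J. z j \<in> ga_group G A"
    and sum_one: "(\<Sum>j\<in>J. of_rat (a j) * z j) = 1"
    and nondeg: "\<forall>I. I \<subseteq> J \<and> I \<noteq> {} \<longrightarrow> (\<Sum>j\<in>I. of_rat (a j) * z j) \<noteq> 0"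
  shows "\<forall>j\<in>J. \<exists>\<gamma>\<in>\<Gamma>. \<exists>\<delta>\<in>Delta \<epsilon>. z j = gp \<gamma> * of_k (dp \<delta>)"
proof -
  have mann: "\<forall>n a x. (\<forall>i<n. a i \<noteq> 0 \<and> x i \<in> ga_group G A) \<and> nondeg_solution n a x \<longrightarrow>
      (\<exists>g d. (\<forall>i<n. g i \<in> \<Gamma> \<and> d i \<in> Delta \<epsilon>)
         \<and> nondeg_solution n a (\<lambda>i. g i * complex_of_real (d i))
         \<and> (\<forall>i<n. x i = gp (g i) * of_k (dp (d i))))"
    using model unfolding model_T_def ga_group_def by (elim conjE) assumption
  define n where "n = card J"
  obtain f where f: "bij_betw f {..<n} J"
    using ex_bij_betw_nat_finite[OF \<open>finite J\<close>] by (auto simp: n_def atLeast0LessThan)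
  have sum_reindex: "(\<Sum>i\<in>I. of_rat (a (f i)) * z (f i)) = (\<Sum>j\<in>f ` I. of_rat (a j) * z j)"
    if "I \<subseteq> {..<n}" for I
  proof -
    have "inj_on f I" using f that by (auto simp: bij_betw_def intro: inj_on_subset)
    then show ?thesis by (simp add: sum.reindex)
  qed
  have "nondeg_solution n (a \<circ> f) (z \<circ> f)"
    unfolding nondeg_solution_def
  proof (intro conjI allI impI)
    show "(\<Sum>i<n. of_rat ((a \<circ> f) i) * (z \<circ> f) i) = 1"
      using sum_reindex[of "{..<n}"] f sum_one by (simp add: bij_betw_def)
    fix I assume I: "I \<subseteq> {..<n} \<and> I \<noteq> {}"
    then have "f ` I \<subseteq> J" "f ` I \<noteq> {}" using f by (auto simp: bij_betw_def)
    then have "(\<Sum>j\<in>f ` I. of_rat (a j) * z j) \<noteq> 0" using nondeg by blast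
    then show "(\<Sum>i\<in>I. of_rat ((a \<circ> f) i) * (z \<circ> f) i) \<noteq> 0"
      using sum_reindex[of I] I by simp
  qed
  moreover have "\<forall>i<n. (a \<circ> f) i \<noteq> 0 \<and> (z \<circ> f) i \<in> ga_group G A"
    using f assms(3,4) by (auto dest: bij_betwE)
  ultimately obtain g d where "\<forall>i<n. g i \<in> \<Gamma> \<and> d i \<in> Delta \<epsilon>"
    "\<forall>i<n. (z \<circ> f) i = gp (g i) * of_k (dp (d i))"
    using mann[rule_format, of n "a \<circ> f" "z \<circ> f"] by blast
  then show ?thesis using f by (auto simp: bij_betw_def)
qed

lemma mann_minimal_zero_subsum:
  assumes model: "model_T \<Gamma> \<epsilon> G A gp dp"
    and min: "minimal_zero_subsum (\<lambda>l. of_rat (c l) * z l) J"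
    and z: "\<forall>l\<in>J. z l \<in> ga_group G A" and "i \<in> J" "j \<in> J" "i \<noteq> j"
  shows "\<exists>\<gamma>\<in>\<Gamma>. \<exists>\<delta>\<in>Delta \<epsilon>. z j = gp \<gamma> * of_k (dp \<delta>) * z i"
proof -
  define t where "t l = of_rat (c l) * z l" for l
  have E: "mult_subgroup (ga_group G A)"
    using ga_group_mult_subgroup model_T_mult_subgroups[OF model] by blast
  have fin: "finite J" and zero: "sum t J = 0" and proper: "\<And>I. I \<subset> J \<Longrightarrow> I \<noteq> {} \<Longrightarrow> sum t I \<noteq> 0"
    using min unfolding minimal_zero_subsum_def t_def by auto
  have t_nonzero: "t l \<noteq> 0" if "l \<in> J" for l
    using proper[of "{l}"] that \<open>i \<in> J\<close> \<open>j \<in> J\<close> \<open>i \<noteq> j\<close> by auto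
  \<comment> \<open>Dividing by \<open>- t i\<close> turns the sum over \<open>J - {i}\<close> into a nondegenerate
    solution of \<open>\<Sum> a l * w l = 1\<close>.\<close>
  define a where "a l = - c l / c i" for l
  define w where "w l = z l / z i" for l
  have scaled: "of_rat (a l) * w l = t l / (- t i)" for l
    using t_nonzero[OF \<open>i \<in> J\<close>]
    by (simp add: a_def w_def t_def of_rat_divide of_rat_minus field_simps)
  have scaled_sum: "(\<Sum>l\<in>I. of_rat (a l) * w l) = sum t I / (- t i)" for I
    by (simp add: scaled sum_divide_distrib sum_negf)
  have "\<forall>l\<in>J - {i}. \<exists>\<gamma>\<in>\<Gamma>. \<exists>\<delta>\<in>Delta \<epsilon>. w l = gp \<gamma> * of_k (dp \<delta>)"
  proof (rule mann_axiom_finite_set[OF model])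
    show "finite (J - {i})" using fin by simp
    show "\<forall>l\<in>J - {i}. a l \<noteq> 0"
      using t_nonzero \<open>i \<in> J\<close> by (auto simp: a_def t_def)
    show "\<forall>l\<in>J - {i}. w l \<in> ga_group G A"
      using z \<open>i \<in> J\<close> mult_subgroup_divide[OF E] by (simp add: w_def)
    have "sum t (J - {i}) = - t i" using zero fin \<open>i \<in> J\<close> by (simp add: sum_diff1)
    then show "(\<Sum>l\<in>J - {i}. of_rat (a l) * w l) = 1"
      using t_nonzero[OF \<open>i \<in> J\<close>] by (simp add: scaled_sum)
    show "\<forall>I. I \<subseteq> J - {i} \<and> I \<noteq> {} \<longrightarrow> (\<Sum>l\<in>I. of_rat (a l) * w l) \<noteq> 0"
      using proper t_nonzero[OF \<open>i \<in> J\<close>] \<open>i \<in> J\<close> by (auto simp: scaled_sum)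
  qed
  then obtain \<gamma> \<delta> where "\<gamma> \<in> \<Gamma>" "\<delta> \<in> Delta \<epsilon>" and wj: "w j = gp \<gamma> * of_k (dp \<delta>)"
    using \<open>j \<in> J\<close> \<open>i \<noteq> j\<close> by blast
  moreover have "z i \<noteq> 0" using z \<open>i \<in> J\<close> mult_subgroup_nonzero[OF E] by blast
  then have "z j = gp \<gamma> * of_k (dp \<delta>) * z i" by (simp add: wj[symmetric] w_def)
  ultimately show ?thesis by blast
qed

lemma power_mem_ga_group_of_relation:
  assumes model: "model_T \<Gamma> \<epsilon> G A gp dp"
    and G': "mult_subgroup G'" "G' \<subseteq> G" "gp ` \<Gamma> \<subseteq> G'"
    and A': "mult_subgroup A'" "A' \<subseteq> A" "dp ` Delta \<epsilon> \<subseteq> A'"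
    and x: "x \<in> ga_group G A"
    and rel: "finite N" "\<forall>n\<in>N. s n \<in> rat_span (ga_group G' A')" "n0 \<in> N" "s n0 \<noteq> 0"
      "(\<Sum>n\<in>N. s n * x ^ n) = 0"
  shows "\<exists>m\<ge>1. x ^ m \<in> ga_group G' A'"
proof -
  let ?H = "ga_group G' A'" and ?E = "ga_group G A"
  have H: "mult_subgroup ?H" using G'(1) A'(1) by (rule ga_group_mult_subgroup)
  have E: "mult_subgroup ?E"
    using model_T_mult_subgroups[OF model] by (rule ga_group_mult_subgroup)
  have HE: "?H \<subseteq> ?E" using G'(2) A'(2) by (rule ga_group_mono)
  have "x \<noteq> 0" using E x by (rule mult_subgroup_nonzero)
  obtain J c where J: "J \<subseteq> N \<times> ?H"
      "minimal_zero_subsum (\<lambda>l. of_rat (c l) * (snd l * x ^ fst l)) J"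
    and "\<exists>i\<in>J. \<exists>j\<in>J. fst i \<noteq> fst j"
    using rat_span_relation_minimal_zero_subsum[OF rel(1-4) \<open>x \<noteq> 0\<close> rel(5)] by blast
  then obtain i j where ij: "i \<in> J" "j \<in> J" "fst i \<noteq> fst j" by blast
  have Hi: "snd i \<in> ?H" and Hj: "snd j \<in> ?H" using J(1) ij(1,2) by auto
  have "snd l * x ^ fst l \<in> ?E" if "l \<in> J" for l
  proof -
    have "snd l \<in> ?H" using J(1) that by auto
    then have "snd l \<in> ?E" using HE by blast
    then show ?thesis using mult_subgroup_mult[OF E _ mult_subgroup_power[OF E x]] by blast
  qed
  moreover have "i \<noteq> j" using ij(3) by blast
  ultimately obtain \<gamma> \<delta> where "\<gamma> \<in> \<Gamma>" "\<delta> \<in> Delta \<epsilon>"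
    and zj: "snd j * x ^ fst j = gp \<gamma> * of_k (dp \<delta>) * (snd i * x ^ fst i)"
    using mann_minimal_zero_subsum[OF model J(2) _ ij(1,2)] by blast
  then have "gp \<gamma> * of_k (dp \<delta>) \<in> ?H"
    using G'(3) A'(3) unfolding ga_group_def by blast
  then have "gp \<gamma> * of_k (dp \<delta>) * snd i / snd j \<in> ?H"
    using mult_subgroup_divide[OF H mult_subgroup_mult[OF H _ Hi] Hj] by blast
  moreover have "snd i \<noteq> 0" "snd j \<noteq> 0"
    using Hi Hj mult_subgroup_nonzero[OF H] by blast+
  then have "gp \<gamma> * of_k (dp \<delta>) * snd i / snd j = x ^ fst j / x ^ fst i"
    using zj \<open>x \<noteq> 0\<close> by (simp add: field_simps)
  ultimately have "x ^ fst j / x ^ fst i \<in> ?H" by simp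
  moreover have "fst j \<noteq> fst i" using ij(3) by simp
  ultimately show ?thesis using power_mem_of_quotient[OF H \<open>x \<noteq> 0\<close>] by blast
qed

lemma power_mem_ga_group_of_free:
  assumes model: "model_T \<Gamma> \<epsilon> G A gp dp"
    and G': "mult_subgroup G'" "G' \<subseteq> G" "gp ` \<Gamma> \<subseteq> G'"
    and A': "mult_subgroup A'" "A' \<subseteq> A" "dp ` Delta \<epsilon> \<subseteq> A'"
    and free: "free_over (gen_subfield (ga_group G' A')) X (gen_subfield (ga_group G A))"
    and y: "y \<in> ga_group G A" "y \<in> X"
  shows "\<exists>m\<ge>1. y ^ m \<in> ga_group G' A'"
proof -
  let ?H = "ga_group G' A'"
  have H: "mult_subgroup ?H" using G'(1) A'(1) by (rule ga_group_mult_subgroup)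
  have "y \<in> gen_subfield (ga_group G A)" using y(1) gen_subfield_subset by blast
  then obtain N r n0 where rel: "finite N" "\<forall>n\<in>N. r n \<in> gen_subfield ?H" "n0 \<in> N"
    "r n0 \<noteq> 0" "(\<Sum>n\<in>N. r n * y ^ n) = 0"
    using free_over_algebraic_relation[OF free y(2) is_subfield_gen_subfield] by blast
  have "\<forall>n\<in>N. r n \<in> rat_frac ?H" using rel(2) gen_subfield_subset_rat_frac[OF H] by blast
  then obtain D where D: "D \<noteq> 0" "\<forall>n\<in>N. D * r n \<in> rat_span ?H"
    using rat_frac_common_denominator[OF H rel(1)] by blast
  have "D * r n0 \<noteq> 0" using D(1) rel(4) by simp
  moreover have "(\<Sum>n\<in>N. D * r n * y ^ n) = D * (\<Sum>n\<in>N. r n * y ^ n)"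
    by (simp add: sum_distrib_left mult.assoc)
  then have "(\<Sum>n\<in>N. D * r n * y ^ n) = 0" using rel(5) by simp
  ultimately show ?thesis
    by (rule power_mem_ga_group_of_relation[OF model G' A' y(1) rel(1) D(2) rel(3)])
qed

section \<open>Intersections with K' and the map \<lambda>\<close>

lemma circle_mult_of_k_eq_one:
  fixes u :: "'k::linordered_field cx"
  assumes "u \<in> circle" "u * of_k a \<in> circle" "0 < a"
  shows "a = 1"
proof -
  obtain p q where u: "u = Cx p q" by (cases u)
  have "p * p + q * q = 1" using assms(1) u by (simp add: circle_def)
  moreover have "(p * a) * (p * a) + (q * a) * (q * a) = 1"
    using assms(2) u by (simp add: circle_def of_k_def times_cx_def)
  moreover have "(p * a) * (p * a) + (q * a) * (q * a) = (a * a) * (p * p + q * q)"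
    by (simp add: algebra_simps)
  ultimately have "a * a = 1" by simp
  then show ?thesis using assms(3) by (auto simp: square_eq_1_iff)
qed

lemma of_k_eq_circle_mult:
  fixes u :: "'k::linordered_field cx"
  assumes "u \<in> circle" "of_k b = u * of_k c" "0 < c" "0 < b"
  shows "b = c"
proof -
  obtain p q where u: "u = Cx p q" by (cases u)
  have b: "b = p * c" and "q * c = 0" using assms(2) u by (simp_all add: of_k_def times_cx_def)
  then have "q = 0" using assms(3) by simp
  then have "p * p = 1" using assms(1) u by (simp add: circle_def)
  moreover have "0 < p" using b assms(3,4) by (simp add: zero_less_mult_iff)
  ultimately have "p = 1" by (auto simp: square_eq_1_iff)
  then show ?thesis using b by simp
qed

lemma circle_group_inter_eq:
  assumes G: "mult_subgroup G" "G \<subseteq> circle" and G': "pure_subgroup G' G" "torsion G \<subseteq> G'"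
    and "A' \<subseteq> {x. 0 < x}" "G' \<subseteq> X"
    and roots: "\<And>g. g \<in> G \<Longrightarrow> g \<in> X \<Longrightarrow> \<exists>m\<ge>1. g ^ m \<in> ga_group G' A'"
  shows "G \<inter> X = G'"
proof
  show "G' \<subseteq> G \<inter> X" using G'(1) \<open>G' \<subseteq> X\<close> unfolding pure_subgroup_def by blast
  show "G \<inter> X \<subseteq> G'"
  proof
    fix g assume "g \<in> G \<inter> X"
    then obtain m g' a' where g: "g \<in> G" "m \<ge> 1" "g ^ m = g' * of_k a'" "g' \<in> G'" "a' \<in> A'"
      using roots unfolding ga_group_def by blast
    have "g' \<in> circle" using g(4) G'(1) G(2) unfolding pure_subgroup_def by blast
    moreover have "g' * of_k a' \<in> circle"
      using g(1,3) G mult_subgroup_power by (metis subsetD)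
    ultimately have "a' = 1" using circle_mult_of_k_eq_one \<open>A' \<subseteq> {x. 0 < x}\<close> g(5) by blast
    then have "g ^ m \<in> G'" using g(3,4) by (simp add: of_k_one)
    then show "g \<in> G'" using pure_subgroup_root_mem[OF G'(1,2) G(1) g(1,2)] by blast
  qed
qed

lemma pos_group_inter_eq:
  fixes A :: "'k::linordered_field set"
  assumes A: "mult_subgroup A" "A \<subseteq> {x. 0 < x}" and A': "pure_subgroup A' A" "A' \<subseteq> K'"
    and "G' \<subseteq> circle"
    and roots: "\<And>a. a \<in> A \<Longrightarrow> a \<in> K' \<Longrightarrow> \<exists>m\<ge>1. of_k a ^ m \<in> ga_group G' A'"
  shows "A \<inter> K' = A'"
proof
  show "A' \<subseteq> A \<inter> K'" using A' unfolding pure_subgroup_def by blast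
  have torsion: "torsion A \<subseteq> A'"
    using torsion_subset_one[OF A(2)] A'(1) mult_subgroup_one unfolding pure_subgroup_def by blast
  show "A \<inter> K' \<subseteq> A'"
  proof
    fix a assume "a \<in> A \<inter> K'"
    then obtain m g' a' where a: "a \<in> A" "m \<ge> 1" "of_k (a ^ m) = g' * of_k a'" "g' \<in> G'" "a' \<in> A'"
      using roots unfolding ga_group_def of_k_power by blast
    have "0 < a'" using a(5) A(2) A'(1) unfolding pure_subgroup_def by blast
    moreover have "0 < a ^ m" using a(1) A(2) by auto
    ultimately have "a ^ m = a'"
      using of_k_eq_circle_mult[OF _ a(3)] a(4) \<open>G' \<subseteq> circle\<close> by blast
    then show "a \<in> A'" using pure_subgroup_root_mem[OF A'(1) torsion A(1) a(1,2)] a(5) by simp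
  qed
qed

lemma discrete_step_unique:
  fixes A :: "'k::linordered_field set"
  assumes A: "mult_subgroup A" "A \<subseteq> {x. 0 < x}" and least: "\<forall>a\<in>A. 1 < a \<longrightarrow> e \<le> a"
    and a: "a \<in> A" "a \<le> k" "k < a * e" and b: "b \<in> A" "b \<le> k" "k < b * e"
  shows "a = b"
proof -
  have less: "\<not> x < y" if "x \<in> A" "y \<in> A" "y \<le> k" "k < x * e" for x y
  proof
    assume "x < y"
    have "0 < x" using that(1) A(2) by auto
    then have "1 < y / x" using \<open>x < y\<close> by simp
    then have "e \<le> y / x" using least mult_subgroup_divide[OF A(1) that(2,1)] by blast
    then show False using \<open>0 < x\<close> that(3,4) by (simp add: field_simps)
  qed
  have "\<not> a < b" "\<not> b < a" using less[OF a(1) b(1) b(2) a(3)] less[OF b(1) a(1) a(2) b(3)] .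
  then show ?thesis by simp
qed

lemma lam_eq:
  fixes A :: "'k::linordered_field set"
  assumes "mult_subgroup A" "A \<subseteq> {x. 0 < x}" "\<forall>a\<in>A. 1 < a \<longrightarrow> e \<le> a"
    and "a \<in> A" "a \<le> k" "k < a * e"
  shows "lam A e k = a"
  unfolding lam_def
proof (rule the_equality)
  show "a \<in> A \<and> a \<le> k \<and> k < a * e" using assms(4-6) by blast
  show "b = a" if "b \<in> A \<and> b \<le> k \<and> k < b * e" for b
  proof -
    have "a = b" using discrete_step_unique[OF assms, of b] that by blast
    then show ?thesis by (rule sym)
  qed
qed

lemma discrete_in_subset_iff_lam_closed:
  fixes A :: "'k::linordered_field set"
  assumes A: "mult_subgroup A" "A \<subseteq> {x. 0 < x}" "\<forall>a\<in>A. 1 < a \<longrightarrow> e \<le> a"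
    and discrete: "\<forall>k>0. \<exists>a\<in>A. a \<le> k \<and> k < a * e"
    and A': "A \<inter> K' = A'"
  shows "(\<forall>k\<in>K'. 0 < k \<longrightarrow> (\<exists>a\<in>A'. a \<le> k \<and> k < a * e))
    \<longleftrightarrow> (\<forall>k\<in>K'. 0 < k \<longrightarrow> lam A e k \<in> K')"
proof -
  have "(\<exists>a\<in>A'. a \<le> k \<and> k < a * e) \<longleftrightarrow> lam A e k \<in> K'" if "0 < k" for k
  proof -
    obtain a where a: "a \<in> A" "a \<le> k" "k < a * e" using discrete \<open>0 < k\<close> by blast
    then have lam: "lam A e k = a" by (rule lam_eq[OF A])
    have uniq: "b = a" if "b \<in> A'" "b \<le> k" "k < b * e" for b
    proof -
      have "b \<in> A" using that(1) A' by blast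
      from discrete_step_unique[OF A this that(2,3) a] show ?thesis .
    qed
    show ?thesis
    proof
      assume "\<exists>b\<in>A'. b \<le> k \<and> k < b * e"
      then have "a \<in> A'" using uniq by blast
      then show "lam A e k \<in> K'" using lam A' by blast
    next
      assume "lam A e k \<in> K'"
      then have "a \<in> A'" using lam a(1) A' by blast
      then show "\<exists>b\<in>A'. b \<le> k \<and> k < b * e" using a(2,3) by blast
    qed
  qed
  then show ?thesis by blast
qed

theorem mainTheorem12:
  fixes \<Gamma> :: "complex set" and \<epsilon> :: real
    and G :: "'k::linordered_field cx set" and A :: "'k set"
    and gp :: "complex \<Rightarrow> 'k cx" and dp :: "real \<Rightarrow> 'k"
    and \<kappa> :: "'z set"
    and K' :: "'k set" and G' :: "'k cx set" and A' :: "'k set"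
  assumes model: "model_T \<Gamma> \<epsilon> G A gp dp"
    and kappa_inf: "infinite \<kappa>"
    and kappa_big: "ordLess2 (card_of {g * complex_of_real d | g d. g \<in> \<Gamma> \<and> d \<in> Delta \<epsilon>}) (card_of \<kappa>)"
    and K'_rc: "real_closed_subfield K'"
    and K'_small: "ordLess2 (card_of K') (card_of \<kappa>)"
    and G'_pure: "pure_subgroup G' G" and G'_Gamma: "gp ` \<Gamma> \<subseteq> G'"
    and G'_K': "G' \<subseteq> adjoin_i K'"
    and A'_pure: "pure_subgroup A' A" and A'_Delta: "dp ` Delta \<epsilon> \<subseteq> A'"
    and A'_K': "A' \<subseteq> K'"
    and free: "free_over (gen_subfield {g * of_k a | g a. g \<in> G' \<and> a \<in> A'})
                 (adjoin_i K') (gen_subfield {g * of_k a | g a. g \<in> G \<and> a \<in> A})"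
  shows "G \<inter> adjoin_i K' = G' \<and> A \<inter> K' = A'
    \<and> ((\<forall>k\<in>K'. 0 < k \<longrightarrow> (\<exists>a\<in>A'. a \<le> k \<and> k < a * dp \<epsilon>))
        \<longleftrightarrow> (\<forall>k\<in>K'. 0 < k \<longrightarrow> lam A (dp \<epsilon>) k \<in> K'))"
proof -
  have G: "mult_subgroup G" "G \<subseteq> circle"
    and A: "mult_subgroup A" "A \<subseteq> {x. 0 < x}" "\<forall>a\<in>A. 1 < a \<longrightarrow> dp \<epsilon> \<le> a"
    and discrete: "\<forall>k>0. \<exists>a\<in>A. a \<le> k \<and> k < a * dp \<epsilon>"
    and torsion: "torsion G = gp ` torsion \<Gamma>"
    using model unfolding model_T_def by simp_all
  have G': "mult_subgroup G'" "G' \<subseteq> G" and A': "mult_subgroup A'" "A' \<subseteq> A"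
    using G'_pure A'_pure unfolding pure_subgroup_def by simp_all
  note roots = power_mem_ga_group_of_free[OF model G' G'_Gamma A' A'_Delta free[folded ga_group_def]]
  have "torsion G \<subseteq> G'" using torsion G'_Gamma unfolding torsion_def by blast
  moreover have "A' \<subseteq> {x. 0 < x}" using A'(2) A(2) by blast
  ultimately have G_part: "G \<inter> adjoin_i K' = G'"
  proof (rule circle_group_inter_eq[OF G G'_pure _ _ G'_K'])
    fix g assume "g \<in> G" "g \<in> adjoin_i K'"
    then show "\<exists>m\<ge>1. g ^ m \<in> ga_group G' A'" using roots mem_ga_group_left[OF A(1)] by blast
  qed
  have "0 \<in> K'" using K'_rc unfolding real_closed_subfield_def is_subfield_def by blast
  have A_part: "A \<inter> K' = A'"
  proof (rule pos_group_inter_eq[OF A(1,2) A'_pure A'_K'])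
    show "G' \<subseteq> circle" using G'(2) G(2) by blast
    fix a assume "a \<in> A" "a \<in> K'"
    then have "of_k a \<in> adjoin_i K'" using \<open>0 \<in> K'\<close> unfolding of_k_def adjoin_i_def by blast
    then show "\<exists>m\<ge>1. of_k a ^ m \<in> ga_group G' A'"
      using roots mem_ga_group_right[OF G(1) \<open>a \<in> A\<close>] by blast
  qed
  show ?thesis
    using G_part A_part discrete_in_subset_iff_lam_closed[OF A discrete A_part] by blast
qed

end
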